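(* Let $\xi\in(0,1)$, let $\lambda(x)=\sum_{i\ge2}\lambda_ix^{i-1}$ and $\rho(x)=\sum_{j\ge2}\rho_jx^{j-1}$ be degree distributions, let $a$ be the average right degree ($1/a=\int_0^1\rho(x)dx$), and suppose the maximal degree of $\lambda$ is at most $k_va$ and the maximal degree of $\rho$ is at most $k_ca$, for constants $k_v,k_c$. Then for every $x\in(0,\xi]$, $$\left|\frac{d^2}{dx^2}\bigl[\lambda(1-\rho(1-x))\bigr]\right|\le\frac{k_v^2k_c^2\rho(1-x)^2a^4}{(1-\xi)^2}+\frac{k_vk_c^2\rho(1-x)a^3}{(1-\xi)^2}.$$
   Context: A degree distribution is a polynomial $\gamma(x)=\sum_{k\ge2}\gamma_kx^{k-1}$ with $\gamma_k\ge0$ and $\sum_k\gamma_k=1$; its maximal degree is the largest $k$ with $\gamma_k\ne0$. *)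

theory Defs
  imports "HOL-Analysis.Analysis"
begin

text \<open>A degree distribution is given by its coefficient sequence g, where g k = gamma_k,
  representing the polynomial gamma(x) = sum_{k>=2} gamma_k x^(k-1).\<close>

definition degree_distribution :: "(nat \<Rightarrow> real) \<Rightarrow> bool" where
  "degree_distribution g \<longleftrightarrow>
     finite {k. g k \<noteq> 0} \<and> (\<forall>k. 0 \<le> g k) \<and> g 0 = 0 \<and> g 1 = 0 \<and>
     (\<Sum>k\<in>{k. g k \<noteq> 0}. g k) = 1"

definition dd_eval :: "(nat \<Rightarrow> real) \<Rightarrow> real \<Rightarrow> real" where
  "dd_eval g x = (\<Sum>k\<in>{k. g k \<noteq> 0}. g k * x ^ (k - 1))"

definition max_degree :: "(nat \<Rightarrow> real) \<Rightarrow> nat" where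
  "max_degree g = Max {k. g k \<noteq> 0}"

end

theory Submission
  imports Defs
begin

text \<open>With \<open>y = 1 - x\<close> and \<open>u = 1 - \<rho>(y)\<close> the chain rule gives
  \<open>(\<lambda>(1 - \<rho>(1 - x)))'' = \<lambda>''(u) \<rho>'(y)\<^sup>2 - \<lambda>'(u) \<rho>''(y)\<close>, and both terms are nonnegative.
  For \<open>u \<in> [0, 1]\<close>, \<open>\<lambda>'(u)\<close> and \<open>\<lambda>''(u)\<close> are bounded by averages of \<open>k - 1\<close> and \<open>(k - 1)(k - 2)\<close>
  with weights \<open>\<lambda>\<^sub>k\<close>, hence by \<open>d\<^sub>\<lambda>\<close> and \<open>d\<^sub>\<lambda>\<^sup>2\<close>. Comparing terms gives
  \<open>y \<rho>'(y) \<le> d\<^sub>\<rho> \<rho>(y)\<close> and \<open>y\<^sup>2 \<rho>''(y) \<le> d\<^sub>\<rho>\<^sup>2 \<rho>(y)\<close>, and \<open>y \<ge> 1 - \<xi>\<close>.\<close>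

definition dd_deriv :: "(nat \<Rightarrow> real) \<Rightarrow> real \<Rightarrow> real" where
  "dd_deriv g x = (\<Sum>k\<in>{k. g k \<noteq> 0}. g k * real (k - 1) * x ^ (k - 2))"

text \<open>For \<open>k = 2\<close> the exponent \<open>k - 3\<close> truncates to \<open>0\<close>; this is harmless because the factor
  \<open>k - 2\<close> vanishes.\<close>

definition dd_deriv2 :: "(nat \<Rightarrow> real) \<Rightarrow> real \<Rightarrow> real" where
  "dd_deriv2 g x = (\<Sum>k\<in>{k. g k \<noteq> 0}. g k * (real (k - 1) * real (k - 2)) * x ^ (k - 3))"

lemma dd_eval_has_real_derivative [derivative_intros]:
  assumes "finite {k. g k \<noteq> 0}" "(h has_real_derivative h') (at x)"
  shows "((\<lambda>t. dd_eval g (h t)) has_real_derivative dd_deriv g (h x) * h') (at x)"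
  unfolding dd_eval_def dd_deriv_def using assms
  by (auto intro!: derivative_eq_intros sum.cong
      simp: sum_distrib_right numeral_2_eq_2)

lemma dd_deriv_has_real_derivative [derivative_intros]:
  assumes "finite {k. g k \<noteq> 0}" "(h has_real_derivative h') (at x)"
  shows "((\<lambda>t. dd_deriv g (h t)) has_real_derivative dd_deriv2 g (h x) * h') (at x)"
  unfolding dd_deriv_def dd_deriv2_def using assms
  by (auto intro!: derivative_eq_intros sum.cong
      simp: sum_distrib_right numeral_2_eq_2 numeral_3_eq_3)

lemma deriv_deriv_dd_eval_compose:
  assumes "finite {k. f k \<noteq> 0}" "finite {k. g k \<noteq> 0}"
  shows "deriv (deriv (\<lambda>t. dd_eval f (1 - dd_eval g (1 - t)))) x
           = dd_deriv2 f (1 - dd_eval g (1 - x)) * (dd_deriv g (1 - x))\<^sup>2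
             - dd_deriv f (1 - dd_eval g (1 - x)) * dd_deriv2 g (1 - x)"
proof -
  have first: "deriv (\<lambda>t. dd_eval f (1 - dd_eval g (1 - t)))
                 = (\<lambda>t. dd_deriv f (1 - dd_eval g (1 - t)) * dd_deriv g (1 - t))"
    by (rule ext, rule DERIV_imp_deriv) (auto intro!: derivative_eq_intros assms)
  show ?thesis unfolding first
    by (rule DERIV_imp_deriv)
      (auto intro!: derivative_eq_intros assms simp: power2_eq_square)
qed

lemma degree_distribution_finite_support:
  "degree_distribution g \<Longrightarrow> finite {k. g k \<noteq> 0}"
  unfolding degree_distribution_def by simp

lemma degree_distribution_nonneg:
  "degree_distribution g \<Longrightarrow> 0 \<le> g k"
  unfolding degree_distribution_def by simp

lemma degree_distribution_support_bounds:
  assumes "degree_distribution g" "g k \<noteq> 0"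
  shows "2 \<le> k" "k \<le> max_degree g"
  using assms unfolding degree_distribution_def max_degree_def
  by (auto intro: Max_ge) (metis less_2_cases not_le One_nat_def)

lemma degree_distribution_weighted_sum_le:
  assumes g: "degree_distribution g" and w: "\<And>k. g k \<noteq> 0 \<Longrightarrow> w k \<le> B"
  shows "(\<Sum>k\<in>{k. g k \<noteq> 0}. g k * w k) \<le> B"
proof -
  have "(\<Sum>k\<in>{k. g k \<noteq> 0}. g k * w k) \<le> (\<Sum>k\<in>{k. g k \<noteq> 0}. g k * B)"
    using w degree_distribution_nonneg[OF g] by (intro sum_mono mult_left_mono) auto
  also have "\<dots> = B"
    using g by (simp add: degree_distribution_def sum_distrib_right[symmetric])
  finally show ?thesis .
qed

lemma dd_nonneg:
  assumes "degree_distribution g" "0 \<le> v"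
  shows "0 \<le> dd_eval g v" "0 \<le> dd_deriv g v" "0 \<le> dd_deriv2 g v"
  unfolding dd_eval_def dd_deriv_def dd_deriv2_def
  using assms degree_distribution_nonneg by (auto intro!: sum_nonneg)

lemma dd_eval_le_one:
  assumes "degree_distribution g" "0 \<le> v" "v \<le> 1"
  shows "dd_eval g v \<le> 1"
  unfolding dd_eval_def using assms
  by (intro degree_distribution_weighted_sum_le) (auto intro: power_le_one)

lemma dd_deriv_le_max_degree:
  assumes g: "degree_distribution g" and "0 \<le> v" "v \<le> 1"
  shows "dd_deriv g v \<le> real (max_degree g)"
  unfolding dd_deriv_def mult.assoc
proof (rule degree_distribution_weighted_sum_le[OF g])
  fix k assume "g k \<noteq> 0"
  then have "real (k - 1) \<le> real (max_degree g)"
    using degree_distribution_support_bounds[OF g] by force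
  moreover have "real (k - 1) * v ^ (k - 2) \<le> real (k - 1)"
    using assms by (intro mult_left_le) (auto simp: power_le_one)
  ultimately show "real (k - 1) * v ^ (k - 2) \<le> real (max_degree g)"
    by linarith
qed

lemma dd_deriv2_le_max_degree_sq:
  assumes g: "degree_distribution g" and "0 \<le> v" "v \<le> 1"
  shows "dd_deriv2 g v \<le> (real (max_degree g))\<^sup>2"
  unfolding dd_deriv2_def mult.assoc
proof (rule degree_distribution_weighted_sum_le[OF g])
  fix k assume "g k \<noteq> 0"
  then have "k \<le> max_degree g"
    using degree_distribution_support_bounds[OF g] by blast
  then have "real (k - 1) * real (k - 2) \<le> (real (max_degree g))\<^sup>2"
    unfolding power2_eq_square by (intro mult_mono) auto
  moreover have "real (k - 1) * real (k - 2) * v ^ (k - 3) \<le> real (k - 1) * real (k - 2)"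
    using assms by (intro mult_left_le) (auto simp: power_le_one)
  ultimately show "real (k - 1) * (real (k - 2) * v ^ (k - 3)) \<le> (real (max_degree g))\<^sup>2"
    by (simp only: mult.assoc)
qed

lemma dd_deriv_mult_le:
  assumes g: "degree_distribution g" and y: "0 \<le> y"
  shows "y * dd_deriv g y \<le> real (max_degree g) * dd_eval g y"
  unfolding dd_deriv_def dd_eval_def sum_distrib_left
proof (rule sum_mono)
  fix k assume "k \<in> {k. g k \<noteq> 0}"
  then have k: "2 \<le> k" "k \<le> max_degree g"
    using degree_distribution_support_bounds[OF g] by simp_all
  then have "k - 1 = Suc (k - 2)"
    by simp
  then have "y * (g k * real (k - 1) * y ^ (k - 2)) = real (k - 1) * (g k * y ^ (k - 1))"
    by (simp add: mult_ac)
  also have "\<dots> \<le> real (max_degree g) * (g k * y ^ (k - 1))"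
    using k y degree_distribution_nonneg[OF g] by (intro mult_right_mono) simp_all
  finally show "y * (g k * real (k - 1) * y ^ (k - 2)) \<le> real (max_degree g) * (g k * y ^ (k - 1))" .
qed

lemma dd_deriv2_mult_le:
  assumes g: "degree_distribution g" and y: "0 \<le> y"
  shows "y\<^sup>2 * dd_deriv2 g y \<le> (real (max_degree g))\<^sup>2 * dd_eval g y"
  unfolding dd_deriv2_def dd_eval_def sum_distrib_left
proof (rule sum_mono)
  fix k assume "k \<in> {k. g k \<noteq> 0}"
  then have k: "2 \<le> k" "k \<le> max_degree g" "0 \<le> g k"
    using degree_distribution_support_bounds[OF g] degree_distribution_nonneg[OF g] by simp_all
  have "real (k - 2) * (y\<^sup>2 * y ^ (k - 3)) = real (k - 2) * y ^ (k - 1)"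
  proof (cases "k = 2")
    case False
    with k have "k - 1 = 2 + (k - 3)" by simp
    then show ?thesis by (simp add: power_add power2_eq_square)
  qed simp
  then have "y\<^sup>2 * (g k * (real (k - 1) * real (k - 2)) * y ^ (k - 3))
               = (real (k - 1) * real (k - 2)) * (g k * y ^ (k - 1))"
    by (simp add: algebra_simps)
  also have "\<dots> \<le> (real (max_degree g))\<^sup>2 * (g k * y ^ (k - 1))"
    using k y unfolding power2_eq_square by (intro mult_right_mono mult_mono) auto
  finally show "y\<^sup>2 * (g k * (real (k - 1) * real (k - 2)) * y ^ (k - 3))
                  \<le> (real (max_degree g))\<^sup>2 * (g k * y ^ (k - 1))" .
qed

lemma dd_deriv_le_eval_div:
  assumes g: "degree_distribution g" and e: "0 < e" "e \<le> y" and B: "real (max_degree g) \<le> B"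
  shows "dd_deriv g y \<le> B * dd_eval g y / e"
proof -
  have y: "0 \<le> y"
    using e by simp
  have "e * dd_deriv g y \<le> y * dd_deriv g y"
    by (rule mult_right_mono[OF e(2) dd_nonneg(2)[OF g y]])
  also have "\<dots> \<le> real (max_degree g) * dd_eval g y"
    by (rule dd_deriv_mult_le[OF g y])
  also have "\<dots> \<le> B * dd_eval g y"
    by (rule mult_right_mono[OF B dd_nonneg(1)[OF g y]])
  finally show ?thesis
    by (simp add: pos_le_divide_eq[OF e(1)] mult.commute)
qed

lemma dd_deriv2_le_eval_div:
  assumes g: "degree_distribution g" and e: "0 < e" "e \<le> y" and B: "real (max_degree g) \<le> B"
  shows "dd_deriv2 g y \<le> B\<^sup>2 * dd_eval g y / e\<^sup>2"
proof -
  have y: "0 \<le> y"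
    using e by simp
  have "e\<^sup>2 * dd_deriv2 g y \<le> y\<^sup>2 * dd_deriv2 g y"
    using e by (intro mult_right_mono[OF power_mono dd_nonneg(3)[OF g y]]) simp_all
  also have "\<dots> \<le> (real (max_degree g))\<^sup>2 * dd_eval g y"
    by (rule dd_deriv2_mult_le[OF g y])
  also have "\<dots> \<le> B\<^sup>2 * dd_eval g y"
    by (intro mult_right_mono[OF power_mono[OF B] dd_nonneg(1)[OF g y]]) simp
  finally show ?thesis
    using e by (simp add: pos_le_divide_eq mult.commute)
qed

theorem lemma3:
  fixes xi a kv kc x :: real and lam rho :: "nat \<Rightarrow> real"
  assumes "0 < xi" "xi < 1"
    and "degree_distribution lam" "degree_distribution rho"
    and "1 / a = integral {0..1} (dd_eval rho)"
    and "real (max_degree lam) \<le> kv * a"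
    and "real (max_degree rho) \<le> kc * a"
    and "0 < x" "x \<le> xi"
  shows "\<bar>deriv (deriv (\<lambda>t. dd_eval lam (1 - dd_eval rho (1 - t)))) x\<bar>
           \<le> kv\<^sup>2 * kc\<^sup>2 * (dd_eval rho (1 - x))\<^sup>2 * a ^ 4 / (1 - xi)\<^sup>2
             + kv * kc\<^sup>2 * dd_eval rho (1 - x) * a ^ 3 / (1 - xi)\<^sup>2"
proof -
  note lam = \<open>degree_distribution lam\<close> and rho = \<open>degree_distribution rho\<close>
  define y where "y = 1 - x"
  define u where "u = 1 - dd_eval rho y"
  define e where "e = 1 - xi"
  have ye: "0 < e" "e \<le> y" "0 \<le> y" "y \<le> 1"
    using assms unfolding y_def e_def by auto
  have u: "0 \<le> u" "u \<le> 1"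
    using dd_nonneg[OF rho] dd_eval_le_one[OF rho] ye unfolding u_def by auto
  have dlam: "dd_deriv lam u \<le> kv * a" "dd_deriv2 lam u \<le> (kv * a)\<^sup>2"
    using order.trans[OF dd_deriv_le_max_degree[OF lam u] assms(6)]
      order.trans[OF dd_deriv2_le_max_degree_sq[OF lam u] power_mono[OF assms(6) of_nat_0_le_iff]]
    by simp_all
  have "\<bar>deriv (deriv (\<lambda>t. dd_eval lam (1 - dd_eval rho (1 - t)))) x\<bar>
          = \<bar>dd_deriv2 lam u * (dd_deriv rho y)\<^sup>2 - dd_deriv lam u * dd_deriv2 rho y\<bar>"
    unfolding u_def y_def using degree_distribution_finite_support lam rho
    by (simp add: deriv_deriv_dd_eval_compose)
  also have "\<dots> \<le> dd_deriv2 lam u * (dd_deriv rho y)\<^sup>2 + dd_deriv lam u * dd_deriv2 rho y"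
    using dd_nonneg[OF lam u(1)] dd_nonneg[OF rho ye(3)] by (simp add: abs_le_iff)
  also have "\<dots> \<le> (kv * a)\<^sup>2 * (kc * a * dd_eval rho y / e)\<^sup>2
                  + kv * a * ((kc * a)\<^sup>2 * dd_eval rho y / e\<^sup>2)"
    using dlam dd_nonneg[OF lam u(1)] dd_nonneg[OF rho ye(3)]
      dd_deriv_le_eval_div[OF rho ye(1,2) assms(7)] dd_deriv2_le_eval_div[OF rho ye(1,2) assms(7)]
    by (intro add_mono mult_mono power_mono) auto
  also have "\<dots> = kv\<^sup>2 * kc\<^sup>2 * (dd_eval rho y)\<^sup>2 * a ^ 4 / e\<^sup>2
                  + kv * kc\<^sup>2 * dd_eval rho y * a ^ 3 / e\<^sup>2"
    by (simp add: power_divide eval_nat_numeral ac_simps)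
  finally show ?thesis
    unfolding y_def e_def .
qed

end
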